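(* Let $\beta>0$, $g\in\mathcal C(\mathbb R^d)$, $v^*\in\mathbb R^d$, and $\rho$ a probability measure on $\mathbb R^d$ with finite first moment and $v^*\in\operatorname{supp}(\rho)$; set $g^*:=g(v^* )$, $g_r:=\sup_{v\in B_r(v^* )}g(v)-g^*$ for $r>0$, and for $\alpha>0$, $v_\alpha(\rho):=\int we^{-\alpha g(w)}d\rho(w)/\int e^{-\alpha g(w)}d\rho(w)$. (a) If there are $\eta,\nu>0$ with $g(v)-g^*\ge(\eta\|v-v^*\|_2)^{1/\nu}-\beta$ for all $v\in\mathbb R^d$, then for all $r>0$ and $q>\beta$, $$\|v_\alpha(\rho)-v^*\|_2\le\frac{(q+g_r)^\nu}{\eta}+\frac{\exp(-\alpha(q-\beta))}{\rho(B_r(v^* ))}\int\|v-v^*\|_2d\rho(v).\qquad( * )$$ (b) If there are $g_\infty,R_0,\eta>0$ and $\nu\in(0,\infty)$ with $g(v)-g^*\ge(\eta\|v-v^*\|_2)^{1/\nu}-\beta$ for all $v\in B_{R_0}(v^* )$ and $g(v)-g^*>g_\infty$ for all $v\notin B_{R_0}(v^* )$, then $( * )$ holds for all $r\in(0,R_0]$ and $q>\beta$ with $q-\beta+g_r\le g_\infty$.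
   Context: $B_r(v)$ denotes the open Euclidean ball of radius $r$ centered at $v$; $\operatorname{supp}(\rho)$ the support of $\rho$. *)

theory Defs
  imports "HOL-Probability.Probability"
begin

definition msupp :: "'a::metric_space measure \<Rightarrow> 'a set" where
  "msupp \<rho> = {x. \<forall>r>0. measure \<rho> (ball x r) > 0}"

definition g_rad :: "('a::metric_space \<Rightarrow> real) \<Rightarrow> 'a \<Rightarrow> real \<Rightarrow> real" where
  "g_rad g vstar r = (SUP v\<in>ball vstar r. g v) - g vstar"

definition v_alpha :: "real \<Rightarrow> ('a::euclidean_space \<Rightarrow> real) \<Rightarrow> 'a measure \<Rightarrow> 'a" where
  "v_alpha \<alpha> g \<rho> =
     (integral\<^sup>L \<rho> (\<lambda>w. exp (- \<alpha> * g w) *\<^sub>R w)) /\<^sub>R (integral\<^sup>L \<rho> (\<lambda>w. exp (- \<alpha> * g w)))"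

end

theory Submission
  imports Defs
begin

(* v_alpha(rho) - vstar is the e^(-alpha g)-weighted mean of v - vstar, so its norm is at most
   (INT e^(-alpha g) |v - vstar| d rho) / Z with Z = INT e^(-alpha g) d rho.  Split at the radius
   t = (q + g_r)^nu / eta: points closer than t contribute at most t Z, while farther points have
   g >= g(vstar) + q + g_r - beta by the growth condition, so their weight is at most
   e^(-alpha (g(vstar) + q + g_r - beta)).  Since g <= g(vstar) + g_r on the ball B_r around vstar,
   Z >= rho(B_r) e^(-alpha (g(vstar) + g_r)), and the factors e^(-alpha g_r) cancel.  In part (b),
   far points outside B_R0 are handled by g > g(vstar) + g_inf >= g(vstar) + q - beta + g_r. *)

lemma integrable_bounded_scaleR:
  fixes f :: "'a \<Rightarrow> 'b::{banach, second_countable_topology}"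
  assumes "integrable M f" and "w \<in> borel_measurable M" and "\<And>x. \<bar>w x\<bar> \<le> B"
  shows "integrable M (\<lambda>x. w x *\<^sub>R f x)"
proof (rule Bochner_Integration.integrable_bound)
  show "integrable M (\<lambda>x. B * norm (f x))" using assms(1) by simp
  show "(\<lambda>x. w x *\<^sub>R f x) \<in> borel_measurable M"
    using assms(1,2) by measurable
  show "AE x in M. norm (w x *\<^sub>R f x) \<le> norm (B * norm (f x))"
    using assms(3) by (auto intro!: mult_right_mono order_trans[OF _ abs_ge_self])
qed

lemma bdd_above_image_ball:
  fixes g :: "'a::heine_borel \<Rightarrow> real"
  assumes "continuous_on (cball x r) g"
  shows "bdd_above (g ` ball x r)"
proof -
  have "bdd_above (g ` cball x r)"
    using compact_continuous_image[OF assms compact_cball]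
    by (simp add: bounded_imp_bdd_above compact_imp_bounded)
  then show ?thesis by (rule bdd_above_mono) auto
qed

lemma le_g_rad:
  assumes "bdd_above (g ` ball vstar r)" and "v \<in> ball vstar r"
  shows "g v \<le> g vstar + g_rad g vstar r"
  using assms unfolding g_rad_def by (auto intro: cSUP_upper)

lemma le_powr_inverse_if_powr_div_le:
  fixes s \<eta> \<nu> x :: real
  assumes "\<eta> > 0" and "\<nu> > 0" and "s powr \<nu> / \<eta> \<le> x"
  shows "s \<le> (\<eta> * x) powr (1 / \<nu>)"
proof (cases "s > 0")
  case True
  have "s powr \<nu> \<le> \<eta> * x" using assms by (simp add: field_simps)
  then have "(s powr \<nu>) powr (1 / \<nu>) \<le> (\<eta> * x) powr (1 / \<nu>)"
    using assms by (intro powr_mono2) auto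
  then show ?thesis using assms True by (simp add: powr_powr)
next
  case False
  then show ?thesis by (smt (verit) powr_ge_zero)
qed

lemma norm_v_alpha_sub_le:
  fixes g :: "'a::euclidean_space \<Rightarrow> real" and \<rho> :: "'a measure" and \<alpha> :: real
  defines "Z \<equiv> \<integral>w. exp (- \<alpha> * g w) \<partial>\<rho>"
  assumes "integrable \<rho> (\<lambda>w. exp (- \<alpha> * g w))"
    and "integrable \<rho> (\<lambda>w. exp (- \<alpha> * g w) *\<^sub>R w)"
    and "Z > 0"
  shows "norm (v_alpha \<alpha> g \<rho> - vstar) \<le> (\<integral>v. exp (- \<alpha> * g v) * norm (v - vstar) \<partial>\<rho>) / Z"
proof -
  have "v_alpha \<alpha> g \<rho> - vstar = (\<integral>v. exp (- \<alpha> * g v) *\<^sub>R (v - vstar) \<partial>\<rho>) /\<^sub>R Z"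
    using assms(2-4) by (simp add: v_alpha_def Z_def scaleR_diff_right)
  moreover have "norm (\<integral>v. exp (- \<alpha> * g v) *\<^sub>R (v - vstar) \<partial>\<rho>)
      \<le> (\<integral>v. exp (- \<alpha> * g v) * norm (v - vstar) \<partial>\<rho>)"
    using integral_norm_bound[of \<rho> "\<lambda>v. exp (- \<alpha> * g v) *\<^sub>R (v - vstar)"] by simp
  ultimately show ?thesis
    using assms(4) by (simp add: divide_right_mono field_simps)
qed

lemma measure_ball_mult_exp_le_integral:
  fixes g :: "'a::metric_space \<Rightarrow> real"
  assumes "finite_measure \<rho>" and "ball vstar r \<in> sets \<rho>" and "\<alpha> \<ge> 0"
    and "integrable \<rho> (\<lambda>w. exp (- \<alpha> * g w))"
    and "\<forall>v\<in>ball vstar r. g v \<le> g vstar + G"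
  shows "measure \<rho> (ball vstar r) * exp (- \<alpha> * (g vstar + G)) \<le> (\<integral>w. exp (- \<alpha> * g w) \<partial>\<rho>)"
proof -
  interpret finite_measure \<rho> by (fact assms(1))
  have "measure \<rho> (ball vstar r) * exp (- \<alpha> * (g vstar + G))
      = (\<integral>v. indicator (ball vstar r) v * exp (- \<alpha> * (g vstar + G)) \<partial>\<rho>)"
    using assms(2) by simp
  also have "\<dots> \<le> (\<integral>w. exp (- \<alpha> * g w) \<partial>\<rho>)"
  proof (rule integral_mono)
    show "integrable \<rho> (\<lambda>v. indicator (ball vstar r) v * exp (- \<alpha> * (g vstar + G)))"
      using assms(2) by (simp add: integrable_indicator_iff emeasure_eq_measure)
    fix v show "indicator (ball vstar r) v * exp (- \<alpha> * (g vstar + G)) \<le> exp (- \<alpha> * g v)"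
      using assms(3,5) by (cases "v \<in> ball vstar r") (auto intro: mult_left_mono)
  qed (fact assms(4))
  finally show ?thesis .
qed

lemma weighted_dist_integral_le:
  fixes g :: "'a::real_normed_vector \<Rightarrow> real"
  assumes "\<alpha> > 0" and "t \<ge> 0"
    and "integrable \<rho> (\<lambda>v. exp (- \<alpha> * g v))"
    and "integrable \<rho> (\<lambda>v. exp (- \<alpha> * g v) * norm (v - vstar))"
    and "integrable \<rho> (\<lambda>v. norm (v - vstar))"
    and far: "\<forall>v. t \<le> norm (v - vstar) \<longrightarrow> g vstar + L \<le> g v"
  shows "(\<integral>v. exp (- \<alpha> * g v) * norm (v - vstar) \<partial>\<rho>)
    \<le> t * (\<integral>v. exp (- \<alpha> * g v) \<partial>\<rho>) + exp (- \<alpha> * (g vstar + L)) * (\<integral>v. norm (v - vstar) \<partial>\<rho>)"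
proof -
  have pointwise: "exp (- \<alpha> * g v) * norm (v - vstar)
      \<le> t * exp (- \<alpha> * g v) + exp (- \<alpha> * (g vstar + L)) * norm (v - vstar)" for v
  proof (cases "t \<le> norm (v - vstar)")
    case True
    then have "exp (- \<alpha> * g v) \<le> exp (- \<alpha> * (g vstar + L))" using far assms(1) by simp
    then show ?thesis using assms(2) by (simp add: add_increasing mult_right_mono)
  next
    case False
    then show ?thesis
      by (simp add: add_increasing2 mult.commute mult_left_mono)
  qed
  have "(\<integral>v. exp (- \<alpha> * g v) * norm (v - vstar) \<partial>\<rho>)
      \<le> (\<integral>v. t * exp (- \<alpha> * g v) + exp (- \<alpha> * (g vstar + L)) * norm (v - vstar) \<partial>\<rho>)"
    using assms(3-5) pointwise by (intro integral_mono) auto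
  also have "\<dots> = t * (\<integral>v. exp (- \<alpha> * g v) \<partial>\<rho>) + exp (- \<alpha> * (g vstar + L)) * (\<integral>v. norm (v - vstar) \<partial>\<rho>)"
    using assms(3,5) by simp
  finally show ?thesis .
qed

lemma v_alpha_dist_le:
  fixes g :: "'a::euclidean_space \<Rightarrow> real" and \<rho> :: "'a measure"
  assumes "finite_measure \<rho>" and sets: "sets \<rho> = sets borel"
    and "integrable \<rho> (\<lambda>v. norm v)"
    and "g \<in> borel_measurable borel" and "bdd_below (range g)"
    and "\<alpha> > 0" and "t \<ge> 0"
    and far: "\<forall>v. t \<le> norm (v - vstar) \<longrightarrow> g vstar + L \<le> g v"
    and near: "\<forall>v\<in>ball vstar r. g v \<le> g vstar + G"
    and "measure \<rho> (ball vstar r) > 0"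
  shows "norm (v_alpha \<alpha> g \<rho> - vstar)
    \<le> t + exp (- \<alpha> * (L - G)) / measure \<rho> (ball vstar r) * (\<integral>v. norm (v - vstar) \<partial>\<rho>)"
proof -
  interpret finite_measure \<rho> by (fact assms(1))
  obtain c where c: "\<And>v. c \<le> g v" using assms(5) by (auto simp: bdd_below_def)
  define w where "w = (\<lambda>v. exp (- \<alpha> * g v))"
  define Z where "Z = (\<integral>v. w v \<partial>\<rho>)"
  define M where "M = measure \<rho> (ball vstar r)"
  define D where "D = (\<integral>v. norm (v - vstar) \<partial>\<rho>)"
  have meas_eq: "\<And>N. measurable \<rho> N = measurable borel N"
    by (rule measurable_cong_sets[OF sets refl])
  have w_meas: "w \<in> borel_measurable \<rho>"
    unfolding w_def meas_eq using assms(4) by measurable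
  have w_bound: "\<bar>w v\<bar> \<le> exp (- \<alpha> * c)" for v
    unfolding w_def using c assms(6) by simp
  have id_meas: "(\<lambda>v. v) \<in> borel_measurable \<rho>"
    unfolding meas_eq by simp
  have id_int: "integrable \<rho> (\<lambda>v. v)"
    using assms(3) id_meas integrable_norm_iff by blast
  have dist_int: "integrable \<rho> (\<lambda>v. norm (v - vstar))"
    using id_int by (intro integrable_norm) simp
  have w_int: "integrable \<rho> w"
    using w_meas w_bound by (intro integrable_const_bound[where B = "exp (- \<alpha> * c)"]) auto
  have wv_int: "integrable \<rho> (\<lambda>v. w v *\<^sub>R v)"
    by (rule integrable_bounded_scaleR[OF id_int w_meas w_bound])
  have wd_int: "integrable \<rho> (\<lambda>v. w v * norm (v - vstar))"
    using integrable_bounded_scaleR[OF dist_int w_meas w_bound] by simp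
  have Z_ge: "M * exp (- \<alpha> * (g vstar + G)) \<le> Z"
    unfolding M_def Z_def w_def using assms(1,6) w_int near
    by (intro measure_ball_mult_exp_le_integral) (auto simp: sets w_def)
  have "M > 0" using assms(10) M_def by simp
  then have Z_pos: "Z > 0"
    using Z_ge by (smt (verit) exp_gt_zero mult_pos_pos)
  have "norm (v_alpha \<alpha> g \<rho> - vstar) \<le> (\<integral>v. w v * norm (v - vstar) \<partial>\<rho>) / Z"
    using norm_v_alpha_sub_le w_int wv_int Z_pos unfolding w_def Z_def by blast
  also have "\<dots> \<le> (t * Z + exp (- \<alpha> * (g vstar + L)) * D) / Z"
    using weighted_dist_integral_le[OF assms(6,7) _ _ dist_int far] w_int wd_int Z_pos
    unfolding w_def Z_def D_def by (simp add: divide_right_mono)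
  also have "\<dots> = t + exp (- \<alpha> * (g vstar + L)) * D / Z"
    using Z_pos by (simp add: field_simps)
  also have "\<dots> \<le> t + exp (- \<alpha> * (g vstar + L)) * D / (M * exp (- \<alpha> * (g vstar + G)))"
    using Z_ge Z_pos \<open>M > 0\<close> by (intro add_left_mono divide_left_mono) (auto simp: D_def)
  also have "\<dots> = t + exp (- \<alpha> * (g vstar + L)) / exp (- \<alpha> * (g vstar + G)) / M * D"
    by (simp add: divide_inverse mult_ac)
  also have "exp (- \<alpha> * (g vstar + L)) / exp (- \<alpha> * (g vstar + G)) = exp (- \<alpha> * (L - G))"
    by (simp add: exp_diff[symmetric] algebra_simps)
  finally show ?thesis unfolding M_def D_def .
qed

lemma v_alpha_dist_le_of_growth:
  fixes g :: "'a::euclidean_space \<Rightarrow> real" and \<rho> :: "'a measure"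
  assumes "finite_measure \<rho>" and "sets \<rho> = sets borel"
    and "integrable \<rho> (\<lambda>v. norm v)"
    and "continuous_on UNIV g" and "bdd_below (range g)"
    and "vstar \<in> msupp \<rho>" and "\<alpha> > 0" and "r > 0" and "\<eta> > 0" and "\<nu> > 0"
    and growth: "\<forall>v. q + g_rad g vstar r \<le> (\<eta> * norm (v - vstar)) powr (1 / \<nu>)
      \<longrightarrow> g vstar + (q + g_rad g vstar r - \<beta>) \<le> g v"
  shows "norm (v_alpha \<alpha> g \<rho> - vstar)
    \<le> (q + g_rad g vstar r) powr \<nu> / \<eta>
       + exp (- \<alpha> * (q - \<beta>)) / measure \<rho> (ball vstar r) * (\<integral>v. norm (v - vstar) \<partial>\<rho>)"
proof -
  let ?G = "g_rad g vstar r"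
  have "norm (v_alpha \<alpha> g \<rho> - vstar)
    \<le> (q + ?G) powr \<nu> / \<eta>
       + exp (- \<alpha> * ((q + ?G - \<beta>) - ?G)) / measure \<rho> (ball vstar r) * (\<integral>v. norm (v - vstar) \<partial>\<rho>)"
  proof (rule v_alpha_dist_le[OF assms(1-3) _ assms(5,7)])
    show "g \<in> borel_measurable borel"
      using assms(4) by (rule borel_measurable_continuous_onI)
    show "0 \<le> (q + ?G) powr \<nu> / \<eta>"
      using assms(9) by simp
    show "\<forall>v. (q + ?G) powr \<nu> / \<eta> \<le> norm (v - vstar) \<longrightarrow> g vstar + (q + ?G - \<beta>) \<le> g v"
    proof (intro allI impI)
      fix v assume "(q + ?G) powr \<nu> / \<eta> \<le> norm (v - vstar)"
      then have "q + ?G \<le> (\<eta> * norm (v - vstar)) powr (1 / \<nu>)"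
        by (rule le_powr_inverse_if_powr_div_le[OF assms(9,10)])
      then show "g vstar + (q + ?G - \<beta>) \<le> g v" using growth by simp
    qed
    have "bdd_above (g ` ball vstar r)"
      by (rule bdd_above_image_ball, rule continuous_on_subset[OF assms(4)]) simp
    then show "\<forall>v\<in>ball vstar r. g v \<le> g vstar + ?G"
      using le_g_rad by blast
    show "0 < measure \<rho> (ball vstar r)"
      using assms(6,8) unfolding msupp_def by blast
  qed
  then show ?thesis by simp
qed

lemma v_alpha_dist_le_global_growth:
  fixes g :: "'a::euclidean_space \<Rightarrow> real" and \<rho> :: "'a measure"
  assumes "finite_measure \<rho>" and "sets \<rho> = sets borel"
    and "integrable \<rho> (\<lambda>v. norm v)" and "continuous_on UNIV g"
    and "vstar \<in> msupp \<rho>" and "\<alpha> > 0" and "r > 0" and "\<eta> > 0" and "\<nu> > 0"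
    and growth: "\<forall>v. g v - g vstar \<ge> (\<eta> * norm (v - vstar)) powr (1 / \<nu>) - \<beta>"
  shows "norm (v_alpha \<alpha> g \<rho> - vstar)
    \<le> (q + g_rad g vstar r) powr \<nu> / \<eta>
       + exp (- \<alpha> * (q - \<beta>)) / measure \<rho> (ball vstar r) * (\<integral>v. norm (v - vstar) \<partial>\<rho>)"
proof (rule v_alpha_dist_le_of_growth[OF assms(1-4) _ assms(5-9)])
  show "bdd_below (range g)"
  proof (rule bdd_belowI2)
    fix v show "g vstar - \<beta> \<le> g v"
      using growth[rule_format, of v] powr_ge_zero[of "\<eta> * norm (v - vstar)" "1 / \<nu>"] by linarith
  qed
  show "\<forall>v. q + g_rad g vstar r \<le> (\<eta> * norm (v - vstar)) powr (1 / \<nu>)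
      \<longrightarrow> g vstar + (q + g_rad g vstar r - \<beta>) \<le> g v"
  proof (intro allI impI)
    fix v assume "q + g_rad g vstar r \<le> (\<eta> * norm (v - vstar)) powr (1 / \<nu>)"
    then show "g vstar + (q + g_rad g vstar r - \<beta>) \<le> g v"
      using growth[rule_format, of v] by linarith
  qed
qed

lemma v_alpha_dist_le_local_growth:
  fixes g :: "'a::euclidean_space \<Rightarrow> real" and \<rho> :: "'a measure"
  assumes "finite_measure \<rho>" and "sets \<rho> = sets borel"
    and "integrable \<rho> (\<lambda>v. norm v)" and "continuous_on UNIV g"
    and "vstar \<in> msupp \<rho>" and "\<alpha> > 0" and "r > 0" and "\<eta> > 0" and "\<nu> > 0"
    and growth: "\<forall>v\<in>ball vstar R0. g v - g vstar \<ge> (\<eta> * norm (v - vstar)) powr (1 / \<nu>) - \<beta>"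
    and outside: "\<forall>v. v \<notin> ball vstar R0 \<longrightarrow> g v - g vstar > g_inf"
    and "q - \<beta> + g_rad g vstar r \<le> g_inf"
  shows "norm (v_alpha \<alpha> g \<rho> - vstar)
    \<le> (q + g_rad g vstar r) powr \<nu> / \<eta>
       + exp (- \<alpha> * (q - \<beta>)) / measure \<rho> (ball vstar r) * (\<integral>v. norm (v - vstar) \<partial>\<rho>)"
proof (rule v_alpha_dist_le_of_growth[OF assms(1-4) _ assms(5-9)])
  show "bdd_below (range g)"
  proof (rule bdd_belowI2)
    fix v show "min (g vstar - \<beta>) (g vstar + g_inf) \<le> g v"
    proof (cases "v \<in> ball vstar R0")
      case True
      then have "g vstar - \<beta> \<le> g v"
        using growth[rule_format, OF True] powr_ge_zero[of "\<eta> * norm (v - vstar)" "1 / \<nu>"]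
        by linarith
      then show ?thesis by (rule min.coboundedI1)
    next
      case False
      then have "g vstar + g_inf \<le> g v" using outside[rule_format, OF False] by linarith
      then show ?thesis by (rule min.coboundedI2)
    qed
  qed
  show "\<forall>v. q + g_rad g vstar r \<le> (\<eta> * norm (v - vstar)) powr (1 / \<nu>)
      \<longrightarrow> g vstar + (q + g_rad g vstar r - \<beta>) \<le> g v"
  proof (intro allI impI)
    fix v assume v: "q + g_rad g vstar r \<le> (\<eta> * norm (v - vstar)) powr (1 / \<nu>)"
    show "g vstar + (q + g_rad g vstar r - \<beta>) \<le> g v"
    proof (cases "v \<in> ball vstar R0")
      case True
      then show ?thesis using v growth[rule_format, OF True] by linarith
    next
      case False
      then show ?thesis using outside[rule_format, OF False] assms(12) by linarith
    qed
  qed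
qed

theorem mainTheorem16:
  fixes g :: "'a::euclidean_space \<Rightarrow> real" and vstar :: 'a
    and \<rho> :: "'a measure" and \<beta> :: real
  assumes "\<beta> > 0"
    and "continuous_on UNIV g"
    and "prob_space \<rho>" and "sets \<rho> = sets borel"
    and "integrable \<rho> (\<lambda>v. norm v)"
    and "vstar \<in> msupp \<rho>"
  shows
   "(\<forall>\<eta> \<nu>. \<eta> > 0 \<and> \<nu> > 0 \<and>
        (\<forall>v. g v - g vstar \<ge> (\<eta> * norm (v - vstar)) powr (1 / \<nu>) - \<beta>) \<longrightarrow>
      (\<forall>\<alpha> r q. \<alpha> > 0 \<and> r > 0 \<and> q > \<beta> \<longrightarrow>
         norm (v_alpha \<alpha> g \<rho> - vstar)
           \<le> (q + g_rad g vstar r) powr \<nu> / \<eta>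
              + exp (- \<alpha> * (q - \<beta>)) / measure \<rho> (ball vstar r)
                * (\<integral>v. norm (v - vstar) \<partial>\<rho>)))
    \<and>
    (\<forall>g_inf R0 \<eta> \<nu>. g_inf > 0 \<and> R0 > 0 \<and> \<eta> > 0 \<and> \<nu> > 0 \<and>
        (\<forall>v\<in>ball vstar R0. g v - g vstar \<ge> (\<eta> * norm (v - vstar)) powr (1 / \<nu>) - \<beta>) \<and>
        (\<forall>v. v \<notin> ball vstar R0 \<longrightarrow> g v - g vstar > g_inf) \<longrightarrow>
      (\<forall>\<alpha> r q. \<alpha> > 0 \<and> 0 < r \<and> r \<le> R0 \<and> q > \<beta> \<and> q - \<beta> + g_rad g vstar r \<le> g_inf \<longrightarrow>
         norm (v_alpha \<alpha> g \<rho> - vstar)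
           \<le> (q + g_rad g vstar r) powr \<nu> / \<eta>
              + exp (- \<alpha> * (q - \<beta>)) / measure \<rho> (ball vstar r)
                * (\<integral>v. norm (v - vstar) \<partial>\<rho>)))"
proof -
  have "finite_measure \<rho>"
    using assms(3) by (simp add: prob_space_def)
  note setting = this assms(4,5,2,6)
  show ?thesis
    by (intro conjI allI impI; elim conjE)
      (rule v_alpha_dist_le_global_growth[OF setting] v_alpha_dist_le_local_growth[OF setting];
        assumption)+
qed

end
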